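(* Assume Assumption A. Let $\{\mathscr F_1,\dots,\mathscr F_{\mathfrak p},\Delta_{\mathscr F}\}$, $\mathfrak p\ge2$, be a partition of $E$ and $\beta^-_N,\beta_N$ positive sequences with $\beta^-_N/\beta_N\to0$ satisfying (H0)–(H3) with $(a_N,b_N)=(\beta^-_N,\beta_N)$; let $X_{\mathscr F}$ be the Markov chain on $P=\{1,\dots,\mathfrak p\}$ with rates $r_{\mathscr F}(x,y)$ given by (H1). Let $C$ be a communicating class of $X_{\mathscr F}$ and $\mathscr C=\bigcup_{x\in C}\mathscr F_x$. Then for all $\eta\ne\xi\in\mathscr C$ there exists $m(\eta,\xi)\in(0,\infty)$ with $\lim_{N\to\infty}\mu_N(\eta)/\mu_N(\xi)=m(\eta,\xi)$.
   Context: Setting: $E$ is a fixed finite set. For each $N\ge1$, $(\eta^N_t)$ is a continuous-time irreducible Markov chain on $E$ with jump rates $R_N(\eta,\xi)$, holding rates $\lambda_N(\eta)=\sum_{\xi\neq\eta}R_N(\eta,\xi)$ and unique invariant probability $\mu_N$; $\mathbb P_\eta,\mathbb E_\eta$ law/expectation from $\eta$. $H_A=\inf\{t>0:\eta^N_t\in A\}$, $H^+_A=\inf\{t>\tau_1:\eta^N_t\in A\}$, $\tau_1$ first jump time; $\mathrm{Cap}_N(A,B)=\sum_{\eta\in A}\mu_N(\eta)\lambda_N(\eta)\mathbb P_\eta[H_B<H^+_A]$, $\mathrm{Cap}_N(\eta,\xi)=\mathrm{Cap}_N(\{\eta\},\{\xi\})$. The trace on nonempty $F\subset E$ is $\eta^F_t=\eta^N_{S_F(t)}$,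 $S_F(t)=\sup\{s:\int_0^s\mathbf 1\{\eta^N_r\in F\}dr\le t\}$, with jump rates $R^F_N$. Ordered families: a finite family of sequences of positive reals $(a^r_N)$, $r\in\mathfrak R$, is ordered if for all $r\neq s$, $\arctan(a^r_N/a^s_N)$ converges. Assumption A: (i) for each $\eta\neq\xi$, either $R_N(\eta,\xi)=0$ for all $N$ or $>0$ for all $N$; $\mathbb B$ is the set of pairs with positive rates; (ii) for every $m\ge1$ the family $\prod_{(\eta,\xi)\in\mathbb B}R_N(\eta,\xi)^{k(\eta,\xi)}$, $k:\mathbb B\to\mathbb Z_+$, $\sum k=m$, is ordered. Conditions for a partition $\{\mathscr F_1,\dots,\mathscr F_{\mathfrak p},\Delta_{\mathscr F}\}$ (independent of $N$) and $(a_N,b_N)$, with $\mathscr F=\bigcup_x\mathscr F_x$ and $r^{\mathscr F}_N(\mathscr F_x,\mathscr F_y)=\mu_N(\mathscr F_x)^{-1}\sum_{\eta\in\mathscr F_x}\mu_N(\eta)\sum_{\xi\in\mathscr F_y}R^{\mathscr F}_N(\eta,\xi)$: (H0) for each $x$, $\eta\in\mathscr F_x$, $\lim_N\mu_N(\eta)/\mu_N(\mathscr F_x)\in(0,1]$ exists; (H1) for $x\ne y$, $r_{\mathscr F}(x,y):=\lim_Nb_Nr^{\mathscr F}_N(\mathscr F_x,\mathscr F_y)\in[0,\infty)$ exists, and $\sum_x\sum_{y\ne x}r_{\mathscr F}(x,y)>0$; (H2) for $|\mathscr F_x|\ge2$, $\eta\ne\xi\in\mathscr F_x$: $\liminf_Na_N\mathrm{Cap}_N(\eta,\xi)/\mu_N(\mathscr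 F_x)>0$; (H3) for every $t>0$, $\lim_N\max_\eta\mathbb E_\eta[\int_0^t\mathbf 1\{\eta^N_{sb_N}\in\Delta_{\mathscr F}\}ds]=0$. *)

theory Defs
  imports "HOL-Analysis.Analysis"
begin

text \<open>State space E is a finite type 'a. A model is a sequence of rate functions
  R N eta xi (diagonal entries ignored) and invariant probabilities mu N.\<close>

definition holding_rate :: "(nat \<Rightarrow> 'a::finite \<Rightarrow> 'a \<Rightarrow> real) \<Rightarrow> nat \<Rightarrow> 'a \<Rightarrow> real" where
  "holding_rate R N eta = (\<Sum>xi\<in>UNIV - {eta}. R N eta xi)"

definition jump_prob :: "(nat \<Rightarrow> 'a::finite \<Rightarrow> 'a \<Rightarrow> real) \<Rightarrow> nat \<Rightarrow> 'a \<Rightarrow> 'a \<Rightarrow> real" where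
  "jump_prob R N eta xi = (if xi = eta then 0 else R N eta xi / holding_rate R N eta)"

text \<open>first_entr p F n z x: probability, for the discrete chain with transition matrix p
  started at z, that the first visit to F (time 0 included) happens at step n at the state x.\<close>
fun first_entr :: "('a::finite \<Rightarrow> 'a \<Rightarrow> real) \<Rightarrow> 'a set \<Rightarrow> nat \<Rightarrow> 'a \<Rightarrow> 'a \<Rightarrow> real" where
  "first_entr p F 0 z x = (if z \<in> F \<and> z = x then 1 else 0)"
| "first_entr p F (Suc n) z x = (if z \<in> F then 0 else (\<Sum>y\<in>UNIV. p z y * first_entr p F n y x))"

text \<open>hit_at R N F z x = P_z[H_F < infinity, eta(H_F) = x] (hitting time H_F of the
  continuous-time chain started at z; the jump chain visits the same states in the same order).\<close>
definition hit_at :: "(nat \<Rightarrow> 'a::finite \<Rightarrow> 'a \<Rightarrow> real) \<Rightarrow> nat \<Rightarrow> 'a set \<Rightarrow> 'a \<Rightarrow> 'a \<Rightarrow> real" where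
  "hit_at R N F z x = (\<Sum>n. first_entr (jump_prob R N) F n z x)"

text \<open>escape_prob R N A B eta = P_eta[H_B < H^+_A] (A, B disjoint).\<close>
definition escape_prob :: "(nat \<Rightarrow> 'a::finite \<Rightarrow> 'a \<Rightarrow> real) \<Rightarrow> nat \<Rightarrow> 'a set \<Rightarrow> 'a set \<Rightarrow> 'a \<Rightarrow> real" where
  "escape_prob R N A B eta = (\<Sum>y\<in>UNIV. jump_prob R N eta y * (\<Sum>x\<in>B. hit_at R N (A \<union> B) y x))"

definition Cap :: "(nat \<Rightarrow> 'a::finite \<Rightarrow> 'a \<Rightarrow> real) \<Rightarrow> (nat \<Rightarrow> 'a \<Rightarrow> real) \<Rightarrow> nat \<Rightarrow> 'a set \<Rightarrow> 'a set \<Rightarrow> real" where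
  "Cap R mu N A B = (\<Sum>eta\<in>A. mu N eta * holding_rate R N eta * escape_prob R N A B eta)"

text \<open>Jump rates of the trace process on F: for eta \<noteq> xi in F,
  R^F_N(eta,xi) = lambda_N(eta) P_eta[H^+_F = H_xi].\<close>
definition trace_rate :: "(nat \<Rightarrow> 'a::finite \<Rightarrow> 'a \<Rightarrow> real) \<Rightarrow> nat \<Rightarrow> 'a set \<Rightarrow> 'a \<Rightarrow> 'a \<Rightarrow> real" where
  "trace_rate R N F eta xi =
     (if eta = xi then 0 else holding_rate R N eta * (\<Sum>y\<in>UNIV. jump_prob R N eta y * hit_at R N F y xi))"

definition mean_rate :: "(nat \<Rightarrow> 'a::finite \<Rightarrow> 'a \<Rightarrow> real) \<Rightarrow> (nat \<Rightarrow> 'a \<Rightarrow> real) \<Rightarrow> nat \<Rightarrow> 'a set \<Rightarrow> 'a set \<Rightarrow> 'a set \<Rightarrow> real" where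
  "mean_rate R mu N F X Y =
     (\<Sum>eta\<in>X. mu N eta * (\<Sum>xi\<in>Y. trace_rate R N F eta xi)) / (\<Sum>eta\<in>X. mu N eta)"

definition generator :: "(nat \<Rightarrow> 'a::finite \<Rightarrow> 'a \<Rightarrow> real) \<Rightarrow> nat \<Rightarrow> 'a \<Rightarrow> 'a \<Rightarrow> real" where
  "generator R N eta xi = (if eta = xi then - holding_rate R N eta else R N eta xi)"

fun generator_pow :: "(nat \<Rightarrow> 'a::finite \<Rightarrow> 'a \<Rightarrow> real) \<Rightarrow> nat \<Rightarrow> nat \<Rightarrow> 'a \<Rightarrow> 'a \<Rightarrow> real" where
  "generator_pow R N 0 eta xi = (if eta = xi then 1 else 0)"
| "generator_pow R N (Suc k) eta xi = (\<Sum>y\<in>UNIV. generator R N eta y * generator_pow R N k y xi)"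

definition trans_prob :: "(nat \<Rightarrow> 'a::finite \<Rightarrow> 'a \<Rightarrow> real) \<Rightarrow> nat \<Rightarrow> real \<Rightarrow> 'a \<Rightarrow> 'a \<Rightarrow> real" where
  "trans_prob R N t eta xi = (\<Sum>k. t ^ k / fact k * generator_pow R N k eta xi)"

text \<open>occupation R N D b t eta = E_eta[ integral_0^t 1{eta^N(s b) \<in> D} ds ].\<close>
definition occupation :: "(nat \<Rightarrow> 'a::finite \<Rightarrow> 'a \<Rightarrow> real) \<Rightarrow> nat \<Rightarrow> 'a set \<Rightarrow> real \<Rightarrow> real \<Rightarrow> 'a \<Rightarrow> real" where
  "occupation R N D b t eta = integral {0..t} (\<lambda>s. \<Sum>xi\<in>D. trans_prob R N (s * b) eta xi)"

definition irreducible_rates :: "(nat \<Rightarrow> 'a::finite \<Rightarrow> 'a \<Rightarrow> real) \<Rightarrow> bool" where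
  "irreducible_rates R \<longleftrightarrow>
     (\<forall>N eta xi. eta \<noteq> xi \<longrightarrow> R N eta xi \<ge> 0) \<and>
     (\<forall>N eta xi. (eta, xi) \<in> {(a, b). a \<noteq> b \<and> R N a b > 0}\<^sup>*)"

definition invariant_prob :: "(nat \<Rightarrow> 'a::finite \<Rightarrow> 'a \<Rightarrow> real) \<Rightarrow> (nat \<Rightarrow> 'a \<Rightarrow> real) \<Rightarrow> bool" where
  "invariant_prob R mu \<longleftrightarrow>
     (\<forall>N eta. mu N eta \<ge> 0) \<and> (\<forall>N. (\<Sum>eta\<in>UNIV. mu N eta) = 1) \<and>
     (\<forall>N xi. (\<Sum>eta\<in>UNIV - {xi}. mu N eta * R N eta xi) = mu N xi * holding_rate R N xi)"

definition ordered_family :: "'r set \<Rightarrow> ('r \<Rightarrow> nat \<Rightarrow> real) \<Rightarrow> bool" where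
  "ordered_family I a \<longleftrightarrow> (\<forall>r\<in>I. \<forall>s\<in>I. r \<noteq> s \<longrightarrow> convergent (\<lambda>N. arctan (a r N / a s N)))"

definition pos_pairs :: "(nat \<Rightarrow> 'a \<Rightarrow> 'a \<Rightarrow> real) \<Rightarrow> ('a \<times> 'a) set" where
  "pos_pairs R = {(eta, xi). eta \<noteq> xi \<and> (\<forall>N. R N eta xi > 0)}"

definition assumption_A :: "(nat \<Rightarrow> 'a::finite \<Rightarrow> 'a \<Rightarrow> real) \<Rightarrow> bool" where
  "assumption_A R \<longleftrightarrow>
     (\<forall>eta xi. eta \<noteq> xi \<longrightarrow> (\<forall>N. R N eta xi = 0) \<or> (\<forall>N. R N eta xi > 0)) \<and>
     (\<forall>m::nat. m \<ge> 1 \<longrightarrow>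
        ordered_family
          {k :: 'a \<times> 'a \<Rightarrow> nat. (\<forall>e. e \<notin> pos_pairs R \<longrightarrow> k e = 0) \<and> (\<Sum>e\<in>pos_pairs R. k e) = m}
          (\<lambda>k N. \<Prod>e\<in>pos_pairs R. R N (fst e) (snd e) ^ k e))"

definition is_partition :: "nat \<Rightarrow> (nat \<Rightarrow> 'a set) \<Rightarrow> 'a set \<Rightarrow> bool" where
  "is_partition p F D \<longleftrightarrow>
     (\<forall>x\<in>{1..p}. F x \<noteq> {}) \<and>
     (\<forall>x\<in>{1..p}. \<forall>y\<in>{1..p}. x \<noteq> y \<longrightarrow> F x \<inter> F y = {}) \<and>
     (\<forall>x\<in>{1..p}. F x \<inter> D = {}) \<and>
     (\<Union>x\<in>{1..p}. F x) \<union> D = UNIV"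

definition muS :: "(nat \<Rightarrow> 'a \<Rightarrow> real) \<Rightarrow> nat \<Rightarrow> 'a set \<Rightarrow> real" where
  "muS mu N A = (\<Sum>eta\<in>A. mu N eta)"

definition Fset :: "nat \<Rightarrow> (nat \<Rightarrow> 'a set) \<Rightarrow> 'a set" where
  "Fset p F = (\<Union>x\<in>{1..p}. F x)"

definition rF :: "(nat \<Rightarrow> 'a::finite \<Rightarrow> 'a \<Rightarrow> real) \<Rightarrow> (nat \<Rightarrow> 'a \<Rightarrow> real) \<Rightarrow> nat \<Rightarrow> (nat \<Rightarrow> 'a set)
                  \<Rightarrow> (nat \<Rightarrow> real) \<Rightarrow> nat \<Rightarrow> nat \<Rightarrow> real" where
  "rF R mu p F b x y = lim (\<lambda>N. b N * mean_rate R mu N (Fset p F) (F x) (F y))"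

definition H0 :: "(nat \<Rightarrow> 'a::finite \<Rightarrow> real) \<Rightarrow> nat \<Rightarrow> (nat \<Rightarrow> 'a set) \<Rightarrow> bool" where
  "H0 mu p F \<longleftrightarrow> (\<forall>x\<in>{1..p}. \<forall>eta\<in>F x. \<exists>c. 0 < c \<and> c \<le> 1 \<and>
      (\<lambda>N. mu N eta / muS mu N (F x)) \<longlonglongrightarrow> c)"

definition H1 :: "(nat \<Rightarrow> 'a::finite \<Rightarrow> 'a \<Rightarrow> real) \<Rightarrow> (nat \<Rightarrow> 'a \<Rightarrow> real) \<Rightarrow> nat \<Rightarrow> (nat \<Rightarrow> 'a set)
                  \<Rightarrow> (nat \<Rightarrow> real) \<Rightarrow> bool" where
  "H1 R mu p F b \<longleftrightarrow>
     (\<forall>x\<in>{1..p}. \<forall>y\<in>{1..p}. x \<noteq> y \<longrightarrow>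
        (\<exists>r. 0 \<le> r \<and> (\<lambda>N. b N * mean_rate R mu N (Fset p F) (F x) (F y)) \<longlonglongrightarrow> r)) \<and>
     (\<Sum>x\<in>{1..p}. \<Sum>y\<in>{1..p} - {x}. rF R mu p F b x y) > 0"

definition H2 :: "(nat \<Rightarrow> 'a::finite \<Rightarrow> 'a \<Rightarrow> real) \<Rightarrow> (nat \<Rightarrow> 'a \<Rightarrow> real) \<Rightarrow> nat \<Rightarrow> (nat \<Rightarrow> 'a set)
                  \<Rightarrow> (nat \<Rightarrow> real) \<Rightarrow> bool" where
  "H2 R mu p F a \<longleftrightarrow>
     (\<forall>x\<in>{1..p}. card (F x) \<ge> 2 \<longrightarrow> (\<forall>eta\<in>F x. \<forall>xi\<in>F x. eta \<noteq> xi \<longrightarrow>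
        liminf (\<lambda>N. ereal (a N * Cap R mu N {eta} {xi} / muS mu N (F x))) > 0))"

definition H3 :: "(nat \<Rightarrow> 'a::finite \<Rightarrow> 'a \<Rightarrow> real) \<Rightarrow> 'a set \<Rightarrow> (nat \<Rightarrow> real) \<Rightarrow> bool" where
  "H3 R D b \<longleftrightarrow>
     (\<forall>t::real. t > 0 \<longrightarrow> (\<lambda>N. Max (range (\<lambda>eta. occupation R N D (b N) t eta))) \<longlonglongrightarrow> 0)"

definition comm_class :: "nat \<Rightarrow> (nat \<Rightarrow> nat \<Rightarrow> real) \<Rightarrow> nat set \<Rightarrow> bool" where
  "comm_class p r C \<longleftrightarrow>
     (let reach = {(x, y). x \<in> {1..p} \<and> y \<in> {1..p} \<and> x \<noteq> y \<and> r x y > 0}\<^sup>* in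
       (\<exists>x\<in>{1..p}. C = {y\<in>{1..p}. (x, y) \<in> reach \<and> (y, x) \<in> reach}))"

end

theory Submission
  imports Defs "HOL-Library.Landau_Symbols"
begin

(* Eliminating the states one at a time from the balance equations (a Gaussian elimination
   that keeps all coefficients nonnegative) shows that the invariant measure mu_N is
   proportional to a vector of polynomials in the jump rates with positive coefficients,
   all homogeneous of the same degree.  By Assumption A any two monomials of equal degree
   are asymptotically comparable, so mu_N(eta) / mu_N(xi) either converges or tends to
   infinity.

   On the other hand mu_N restricted to the blocks is invariant for the trace process, so the
   mean flow of the trace into a block F_x cannot exceed the flow out of it.  Together with
   (H1) this bounds mu_N(F_y) by a multiple of mu_N(F_x) whenever r_F(y,x) > 0; along the
   paths inside a communicating class all block masses, and by (H0) all state masses, are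
   therefore of the same order.  A ratio of the same order that converges or diverges has a
   positive finite limit. *)

section \<open>Positive forms in the jump rates\<close>

definition rate_monomial :: "(nat \<Rightarrow> 'a \<Rightarrow> 'a \<Rightarrow> real) \<Rightarrow> ('a \<times> 'a \<Rightarrow> nat) \<Rightarrow> nat \<Rightarrow> real" where
  "rate_monomial R k N = (\<Prod>e\<in>pos_pairs R. R N (fst e) (snd e) ^ k e)"

definition monomial_exponents :: "(nat \<Rightarrow> 'a \<Rightarrow> 'a \<Rightarrow> real) \<Rightarrow> nat \<Rightarrow> ('a \<times> 'a \<Rightarrow> nat) set" where
  "monomial_exponents R m = {k. (\<forall>e. e \<notin> pos_pairs R \<longrightarrow> k e = 0) \<and> (\<Sum>e\<in>pos_pairs R. k e) = m}"

inductive pos_rate_form :: "(nat \<Rightarrow> 'a \<Rightarrow> 'a \<Rightarrow> real) \<Rightarrow> nat \<Rightarrow> (nat \<Rightarrow> real) \<Rightarrow> bool"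
  for R m where
  zero: "pos_rate_form R m (\<lambda>N. 0)"
| monomial: "k \<in> monomial_exponents R m \<Longrightarrow> 0 < c \<Longrightarrow> pos_rate_form R m (\<lambda>N. c * rate_monomial R k N)"
| add: "pos_rate_form R m f \<Longrightarrow> pos_rate_form R m g \<Longrightarrow> pos_rate_form R m (\<lambda>N. f N + g N)"

lemma rate_monomial_pos: "0 < rate_monomial R k N"
  unfolding rate_monomial_def by (rule prod_pos) (auto simp: pos_pairs_def)

lemma rate_monomial_add: "rate_monomial R (\<lambda>e. k e + l e) N = rate_monomial R k N * rate_monomial R l N"
  unfolding rate_monomial_def by (simp add: power_add prod.distrib)

lemma monomial_exponents_add:
  "k \<in> monomial_exponents R m \<Longrightarrow> l \<in> monomial_exponents R n \<Longrightarrow> (\<lambda>e. k e + l e) \<in> monomial_exponents R (m + n)"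
  unfolding monomial_exponents_def by (simp add: sum.distrib)

lemma monomial_exponents_0:
  fixes R :: "nat \<Rightarrow> 'a::finite \<Rightarrow> 'a \<Rightarrow> real"
  shows "monomial_exponents R 0 = {\<lambda>e. 0}"
  unfolding monomial_exponents_def by (auto simp: fun_eq_iff) blast

lemma pos_rate_form_mult:
  assumes "pos_rate_form R m f" "pos_rate_form R n g"
  shows "pos_rate_form R (m + n) (\<lambda>N. f N * g N)"
  using assms(1)
proof (induction rule: pos_rate_form.induct)
  case zero
  show ?case using pos_rate_form.zero by simp
next
  case (monomial k c)
  from assms(2) show ?case
  proof (induction rule: pos_rate_form.induct)
    case zero
    show ?case using pos_rate_form.zero by simp
  next
    case (monomial l d)
    have "pos_rate_form R (m + n) (\<lambda>N. (c * d) * rate_monomial R (\<lambda>e. k e + l e) N)"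
      using \<open>k \<in> monomial_exponents R m\<close> \<open>0 < c\<close> monomial
      by (intro pos_rate_form.monomial monomial_exponents_add) auto
    then show ?case by (simp add: rate_monomial_add mult_ac)
  next
    case (add g1 g2)
    then show ?case using pos_rate_form.add[OF add.IH] by (simp add: distrib_left)
  qed
next
  case (add f1 f2)
  then show ?case using pos_rate_form.add[OF add.IH] by (simp add: distrib_right)
qed

lemma pos_rate_form_sum:
  "(\<And>a. a \<in> A \<Longrightarrow> pos_rate_form R m (h a)) \<Longrightarrow> pos_rate_form R m (\<lambda>N. \<Sum>a\<in>A. h a N)"
proof (induction A rule: infinite_finite_induct)
  case (insert a A)
  then show ?case using pos_rate_form.add[of R m "h a"] by simp
qed (simp_all add: pos_rate_form.zero)

lemma pos_rate_form_one: "pos_rate_form R 0 (\<lambda>N. 1)"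
proof -
  have "pos_rate_form R 0 (\<lambda>N. 1 * rate_monomial R (\<lambda>e. 0) N)"
    by (rule pos_rate_form.monomial) (auto simp: monomial_exponents_def)
  then show ?thesis by (simp add: rate_monomial_def)
qed

lemma pos_rate_form_rate:
  fixes R :: "nat \<Rightarrow> 'a::finite \<Rightarrow> 'a \<Rightarrow> real"
  assumes "(a, b) \<in> pos_pairs R"
  shows "pos_rate_form R 1 (\<lambda>N. R N a b)"
proof -
  define k where "k = (\<lambda>e. if e = (a, b) then 1 else (0::nat))"
  have "rate_monomial R k N = R N a b" for N
  proof -
    have "(\<Prod>e\<in>pos_pairs R - {(a, b)}. R N (fst e) (snd e) ^ k e) = 1"
      by (rule prod.neutral) (simp add: k_def)
    then show ?thesis
      unfolding rate_monomial_def
      using prod.remove[OF finite assms, of "\<lambda>e. R N (fst e) (snd e) ^ k e"] by (simp add: k_def)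
  qed
  moreover have "pos_rate_form R 1 (\<lambda>N. 1 * rate_monomial R k N)"
    using assms by (intro pos_rate_form.monomial) (auto simp: monomial_exponents_def k_def)
  ultimately show ?thesis by simp
qed

lemma pos_rate_form_rate_assumption_A:
  fixes R :: "nat \<Rightarrow> 'a::finite \<Rightarrow> 'a \<Rightarrow> real"
  assumes "assumption_A R" "a \<noteq> b"
  shows "pos_rate_form R 1 (\<lambda>N. R N a b)"
proof (cases "\<forall>N. R N a b > 0")
  case True
  then show ?thesis using assms(2) by (intro pos_rate_form_rate) (simp add: pos_pairs_def)
next
  case False
  then have "(\<lambda>N. R N a b) = (\<lambda>N. 0)" using assms unfolding assumption_A_def by auto
  then show ?thesis by (simp add: pos_rate_form.zero)
qed

lemma convergent_arctan_imp_tendsto_or_at_top: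
  fixes x :: "nat \<Rightarrow> real"
  assumes pos: "\<And>N. 0 < x N" and conv: "convergent (\<lambda>N. arctan (x N))"
  shows "(\<exists>L. x \<longlonglongrightarrow> L) \<or> filterlim x at_top sequentially"
proof -
  obtain a where a: "(\<lambda>N. arctan (x N)) \<longlonglongrightarrow> a" using conv convergent_def by blast
  have "a \<le> pi / 2"
    by (intro tendsto_upperbound[OF a] always_eventually allI less_imp_le[OF arctan_ubound]) simp
  moreover have "0 \<le> a"
    by (rule tendsto_lowerbound[OF a]) (simp_all add: less_imp_le pos)
  ultimately consider "a < pi / 2" | "a = pi / 2" by linarith
  then show ?thesis
  proof cases
    case 1
    with \<open>0 \<le> a\<close> have "0 < cos a" by (intro cos_gt_zero_pi) auto
    then have "isCont tan a" by (intro isCont_tan) simp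
    then have "(\<lambda>N. tan (arctan (x N))) \<longlonglongrightarrow> tan a" using a by (rule isCont_tendsto_compose)
    then show ?thesis by (auto simp: tan_arctan)
  next
    case 2
    have "eventually (\<lambda>N. Z \<le> x N) sequentially" for Z
    proof -
      have "arctan Z < a" using 2 arctan_ubound[of Z] by linarith
      with a have "eventually (\<lambda>N. arctan Z < arctan (x N)) sequentially"
        using order_tendstoD(1) by blast
      then show ?thesis by eventually_elim (simp add: arctan_less_iff less_imp_le)
    qed
    then show ?thesis unfolding filterlim_at_top by blast
  qed
qed

lemma bigtheta_imp_tendsto_pos:
  fixes f g :: "nat \<Rightarrow> real"
  assumes f: "\<And>N. 0 < f N" and g: "\<And>N. 0 < g N" and fg: "f \<in> \<Theta>(g)"
    and lim: "(\<exists>L. (\<lambda>N. f N / g N) \<longlonglongrightarrow> L) \<or> filterlim (\<lambda>N. f N / g N) at_top sequentially"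
  shows "\<exists>m>0. (\<lambda>N. f N / g N) \<longlonglongrightarrow> m"
proof -
  obtain c where c: "eventually (\<lambda>N. norm (f N) \<le> c * norm (g N)) sequentially"
    using bigthetaD1[OF fg] by (auto elim: landau_o.bigE)
  obtain c' where "0 < c'" and c': "eventually (\<lambda>N. norm (g N) \<le> c' * norm (f N)) sequentially"
    using bigthetaD1[OF bigtheta_sym[THEN iffD1, OF fg]] by (auto elim: landau_o.bigE)
  have upper: "eventually (\<lambda>N. f N / g N \<le> c) sequentially"
    using c by eventually_elim (simp add: abs_of_pos[OF f] abs_of_pos[OF g] pos_divide_le_eq[OF g])
  have lower: "eventually (\<lambda>N. 1 / c' \<le> f N / g N) sequentially"
    using c' by eventually_elim
      (simp add: abs_of_pos[OF f] abs_of_pos[OF g] pos_le_divide_eq[OF g] pos_divide_le_eq[OF \<open>0 < c'\<close>] mult.commute)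
  have "\<not> filterlim (\<lambda>N. f N / g N) at_top sequentially"
  proof
    assume "filterlim (\<lambda>N. f N / g N) at_top sequentially"
    then have "eventually (\<lambda>N. c + 1 \<le> f N / g N) sequentially" by (simp add: filterlim_at_top)
    with upper have "eventually (\<lambda>N. False) sequentially" by eventually_elim simp
    then show False by simp
  qed
  with lim obtain L where L: "(\<lambda>N. f N / g N) \<longlonglongrightarrow> L" by blast
  have "1 / c' \<le> L" by (rule tendsto_lowerbound[OF L lower]) simp
  with \<open>0 < c'\<close> L show ?thesis by (intro exI[of _ L]) (simp add: order_less_le_trans[of 0 "1 / c'"])
qed

lemma monomial_ratio_tendsto_or_at_top:
  fixes R :: "nat \<Rightarrow> 'a::finite \<Rightarrow> 'a \<Rightarrow> real"
  assumes A: "assumption_A R"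
    and j: "j \<in> monomial_exponents R m" and k: "k \<in> monomial_exponents R m"
  shows "(\<exists>L. (\<lambda>N. rate_monomial R j N / rate_monomial R k N) \<longlonglongrightarrow> L) \<or>
         filterlim (\<lambda>N. rate_monomial R j N / rate_monomial R k N) at_top sequentially"
proof (cases "j = k")
  case True
  then have "(\<lambda>N. rate_monomial R j N / rate_monomial R k N) \<longlonglongrightarrow> 1"
    using rate_monomial_pos[of R k] by (simp add: less_imp_neq[symmetric])
  then show ?thesis by blast
next
  case False
  then have "m \<noteq> 0" using j k monomial_exponents_0[of R] by auto
  then have "ordered_family (monomial_exponents R m) (rate_monomial R)"
    using A unfolding assumption_A_def monomial_exponents_def rate_monomial_def
    by (simp add: fun_eq_iff[symmetric])
  then have "convergent (\<lambda>N. arctan (rate_monomial R j N / rate_monomial R k N))"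
    using j k False unfolding ordered_family_def by blast
  then show ?thesis
    by (intro convergent_arctan_imp_tendsto_or_at_top divide_pos_pos rate_monomial_pos)
qed

lemma tendsto_monomial_ratio_add:
  fixes R :: "nat \<Rightarrow> 'a::finite \<Rightarrow> 'a \<Rightarrow> real"
  assumes A: "assumption_A R"
    and k: "k \<in> monomial_exponents R m" "0 < a" "(\<lambda>N. f N / rate_monomial R k N) \<longlonglongrightarrow> a"
    and j: "j \<in> monomial_exponents R m" "0 < b" "(\<lambda>N. g N / rate_monomial R j N) \<longlonglongrightarrow> b"
  shows "\<exists>i\<in>monomial_exponents R m. \<exists>c>0. (\<lambda>N. (f N + g N) / rate_monomial R i N) \<longlonglongrightarrow> c"
proof -
  have nz: "rate_monomial R i N \<noteq> 0" for i N
    using rate_monomial_pos[of R i N] by simp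
  have split: "(f N + g N) / rate_monomial R i N =
      f N / rate_monomial R k N * (rate_monomial R k N / rate_monomial R i N) +
      g N / rate_monomial R j N * (rate_monomial R j N / rate_monomial R i N)" for i N
    by (simp add: nz add_divide_distrib)
  from monomial_ratio_tendsto_or_at_top[OF A j(1) k(1)] show ?thesis
  proof
    assume "\<exists>L. (\<lambda>N. rate_monomial R j N / rate_monomial R k N) \<longlonglongrightarrow> L"
    then obtain L where L: "(\<lambda>N. rate_monomial R j N / rate_monomial R k N) \<longlonglongrightarrow> L" ..
    have "0 \<le> L"
      by (rule tendsto_lowerbound[OF L]) (simp_all add: less_imp_le divide_pos_pos rate_monomial_pos)
    have "(\<lambda>N. (f N + g N) / rate_monomial R k N) \<longlonglongrightarrow> a * 1 + b * L"
      unfolding split by (intro tendsto_intros k(3) j(3) L) (simp add: nz)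
    moreover have "0 < a * 1 + b * L" using k(2) j(2) \<open>0 \<le> L\<close> by (simp add: add_pos_nonneg)
    ultimately show ?thesis using k(1) by blast
  next
    assume "filterlim (\<lambda>N. rate_monomial R j N / rate_monomial R k N) at_top sequentially"
    then have kj: "(\<lambda>N. rate_monomial R k N / rate_monomial R j N) \<longlonglongrightarrow> 0"
      using tendsto_inverse_0_at_top by fastforce
    have "(\<lambda>N. (f N + g N) / rate_monomial R j N) \<longlonglongrightarrow> a * 0 + b * 1"
      unfolding split by (intro tendsto_intros k(3) j(3) kj) (simp add: nz)
    then show ?thesis using j(1,2) by auto
  qed
qed

lemma pos_rate_form_asymp_monomial:
  fixes R :: "nat \<Rightarrow> 'a::finite \<Rightarrow> 'a \<Rightarrow> real"
  assumes A: "assumption_A R" and f: "pos_rate_form R m f"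
  shows "f = (\<lambda>N. 0) \<or>
    (\<exists>k\<in>monomial_exponents R m. \<exists>a>0. (\<lambda>N. f N / rate_monomial R k N) \<longlonglongrightarrow> a)"
  using f
proof (induction rule: pos_rate_form.induct)
  case (monomial k c)
  have "(\<lambda>N. c * rate_monomial R k N / rate_monomial R k N) \<longlonglongrightarrow> c"
    using rate_monomial_pos[of R k] by (simp add: less_imp_neq[symmetric])
  then show ?case using monomial by blast
next
  case (add f g)
  then consider "f = (\<lambda>N. 0) \<or> g = (\<lambda>N. 0)"
    | k a j b where "k \<in> monomial_exponents R m" "0 < a" "(\<lambda>N. f N / rate_monomial R k N) \<longlonglongrightarrow> a"
        "j \<in> monomial_exponents R m" "0 < b" "(\<lambda>N. g N / rate_monomial R j N) \<longlonglongrightarrow> b"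
    by blast
  then show ?case
  proof cases
    case 1
    then show ?thesis using add.IH by auto
  next
    case 2
    then show ?thesis using tendsto_monomial_ratio_add[OF A] by blast
  qed
qed simp

lemma pos_rate_form_ratio_tendsto_or_at_top:
  fixes R :: "nat \<Rightarrow> 'a::finite \<Rightarrow> 'a \<Rightarrow> real"
  assumes A: "assumption_A R"
    and f: "pos_rate_form R m f" "f \<noteq> (\<lambda>N. 0)" and g: "pos_rate_form R m g" "g \<noteq> (\<lambda>N. 0)"
  shows "(\<exists>L. (\<lambda>N. f N / g N) \<longlonglongrightarrow> L) \<or> filterlim (\<lambda>N. f N / g N) at_top sequentially"
proof -
  obtain k a j b where k: "k \<in> monomial_exponents R m" "0 < a"
      "(\<lambda>N. f N / rate_monomial R k N) \<longlonglongrightarrow> a"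
    and j: "j \<in> monomial_exponents R m" "0 < b"
      "(\<lambda>N. g N / rate_monomial R j N) \<longlonglongrightarrow> b"
    using pos_rate_form_asymp_monomial[OF A f(1)] pos_rate_form_asymp_monomial[OF A g(1)] f(2) g(2)
    by blast
  have split: "f N / g N = f N / rate_monomial R k N / (g N / rate_monomial R j N) *
      (rate_monomial R k N / rate_monomial R j N)" for N
    using rate_monomial_pos[of R _ N] by (simp add: less_imp_neq[symmetric])
  have ab: "(\<lambda>N. f N / rate_monomial R k N / (g N / rate_monomial R j N)) \<longlonglongrightarrow> a / b"
    using j(2) by (intro tendsto_divide k(3) j(3)) simp
  from monomial_ratio_tendsto_or_at_top[OF A k(1) j(1)] show ?thesis
  proof
    assume "\<exists>L. (\<lambda>N. rate_monomial R k N / rate_monomial R j N) \<longlonglongrightarrow> L"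
    then obtain L where "(\<lambda>N. rate_monomial R k N / rate_monomial R j N) \<longlonglongrightarrow> L" ..
    then show ?thesis unfolding split using tendsto_mult[OF ab] by blast
  next
    assume kj: "filterlim (\<lambda>N. rate_monomial R k N / rate_monomial R j N) at_top sequentially"
    have "0 < a / b" using k(2) j(2) by simp
    then show ?thesis unfolding split using filterlim_tendsto_pos_mult_at_top[OF ab _ kj] by blast
  qed
qed

section \<open>Elimination of states and the invariant measure\<close>

definition exit_rate :: "'a set \<Rightarrow> ('a \<Rightarrow> 'a \<Rightarrow> real) \<Rightarrow> 'a \<Rightarrow> real" where
  "exit_rate V Q a = (\<Sum>b\<in>V - {a}. Q a b)"

definition balanced :: "'a set \<Rightarrow> ('a \<Rightarrow> 'a \<Rightarrow> real) \<Rightarrow> ('a \<Rightarrow> real) \<Rightarrow> bool" where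
  "balanced V Q mu \<longleftrightarrow> (\<forall>b\<in>V. (\<Sum>a\<in>V - {b}. mu a * Q a b) = mu b * exit_rate V Q b)"

definition pos_graph :: "'a set \<Rightarrow> ('a \<Rightarrow> 'a \<Rightarrow> real) \<Rightarrow> ('a \<times> 'a) set" where
  "pos_graph V Q = {(a, b). a \<in> V \<and> b \<in> V \<and> a \<noteq> b \<and> 0 < Q a b}"

definition irreducible_on :: "'a set \<Rightarrow> ('a \<Rightarrow> 'a \<Rightarrow> real) \<Rightarrow> bool" where
  "irreducible_on V Q \<longleftrightarrow> (\<forall>a\<in>V. \<forall>b\<in>V. a \<noteq> b \<longrightarrow> 0 \<le> Q a b) \<and> V \<times> V \<subseteq> (pos_graph V Q)\<^sup>*"

text \<open>The rates on V - {z} of the chain observed only outside z, multiplied by the exit rate of z.\<close>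
definition eliminate :: "'a set \<Rightarrow> 'a \<Rightarrow> ('a \<Rightarrow> 'a \<Rightarrow> real) \<Rightarrow> 'a \<Rightarrow> 'a \<Rightarrow> real" where
  "eliminate V z Q a b = Q a b * exit_rate V Q z + Q a z * Q z b"

definition lift :: "'a set \<Rightarrow> 'a \<Rightarrow> ('a \<Rightarrow> 'a \<Rightarrow> real) \<Rightarrow> ('a \<Rightarrow> real) \<Rightarrow> 'a \<Rightarrow> real" where
  "lift V z Q g a = (if a = z then (\<Sum>b\<in>V - {z}. g b * Q b z) else g a * exit_rate V Q z)"

text \<open>The states of the list are eliminated in this order; the value at the empty list is junk.\<close>
fun balance_vector :: "'a list \<Rightarrow> ('a \<Rightarrow> 'a \<Rightarrow> real) \<Rightarrow> 'a \<Rightarrow> real" where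
  "balance_vector [] Q = (\<lambda>a. 1)"
| "balance_vector [z] Q = (\<lambda>a. 1)"
| "balance_vector (z # y # zs) Q =
     lift (set (z # y # zs)) z Q (balance_vector (y # zs) (eliminate (set (z # y # zs)) z Q))"

lemma rtrancl_bypass:
  assumes "(a, b) \<in> E\<^sup>*" "a \<noteq> z" "b \<noteq> z"
  shows "(a, b) \<in> {(u, v). u \<noteq> z \<and> v \<noteq> z \<and> ((u, v) \<in> E \<or> (u, z) \<in> E \<and> (z, v) \<in> E)}\<^sup>*"
    (is "_ \<in> ?B\<^sup>*")
proof -
  have "(b \<noteq> z \<longrightarrow> (a, b) \<in> ?B\<^sup>*) \<and> (b = z \<longrightarrow> (\<exists>y. (a, y) \<in> ?B\<^sup>* \<and> y \<noteq> z \<and> (y, z) \<in> E))"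
    using assms(1)
  proof (induction rule: rtrancl_induct)
    case (step y w)
    show ?case
    proof (cases "y = z")
      case False
      then show ?thesis using step by (auto intro: rtrancl_into_rtrancl)
    next
      case True
      then obtain y' where "(a, y') \<in> ?B\<^sup>*" "y' \<noteq> z" "(y', z) \<in> E" using step.IH by blast
      then show ?thesis using step.hyps(2) True by (auto intro: rtrancl_into_rtrancl)
    qed
  qed (use assms(2) in simp)
  then show ?thesis using assms(3) by blast
qed

lemma irreducible_on_nonneg: "irreducible_on V Q \<Longrightarrow> a \<in> V \<Longrightarrow> b \<in> V \<Longrightarrow> a \<noteq> b \<Longrightarrow> 0 \<le> Q a b"
  unfolding irreducible_on_def by blast

lemma exit_rate_nonneg: "irreducible_on V Q \<Longrightarrow> a \<in> V \<Longrightarrow> 0 \<le> exit_rate V Q a"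
  unfolding exit_rate_def by (auto intro: sum_nonneg irreducible_on_nonneg)

lemma exit_rate_pos:
  assumes "finite V" "irreducible_on V Q" "z \<in> V" "a \<in> V" "a \<noteq> z"
  shows "0 < exit_rate V Q z"
proof -
  have "(z, a) \<in> (pos_graph V Q)\<^sup>*" using assms(2-4) unfolding irreducible_on_def by blast
  then obtain w where "(z, w) \<in> pos_graph V Q" using assms(5) by (blast elim: converse_rtranclE)
  then show ?thesis unfolding exit_rate_def pos_graph_def
    using assms(1-3) by (intro sum_pos2[of _ w]) (auto intro: irreducible_on_nonneg)
qed

lemma entrance_rate_pos:
  assumes "irreducible_on V Q" "z \<in> V" "a \<in> V" "a \<noteq> z"
  obtains b where "b \<in> V - {z}" "0 < Q b z"
proof -
  have "(a, z) \<in> (pos_graph V Q)\<^sup>*" using assms unfolding irreducible_on_def by blast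
  then obtain b where "(b, z) \<in> pos_graph V Q" using assms(4) by (blast elim: rtranclE)
  then show ?thesis using that unfolding pos_graph_def by blast
qed

lemma balanced_eliminate:
  assumes fin: "finite V" and z: "z \<in> V" and bal: "balanced V Q mu"
  shows "balanced (V - {z}) (eliminate V z Q) mu"
  unfolding balanced_def
proof
  fix b assume b: "b \<in> V - {z}"
  define L where "L = exit_rate V Q z"
  define W where "W = V - {z} - {b}"
  have Vb: "V - {b} = insert z W" and Vz: "V - {z} = insert b W" and nin: "z \<notin> W" "b \<notin> W"
    using z b by (auto simp: W_def)
  have finW: "finite W" using fin by (simp add: W_def)
  have "(\<Sum>a\<in>V - {b}. mu a * Q a b) = mu b * (\<Sum>c\<in>V - {b}. Q b c)"
    using bal b unfolding balanced_def exit_rate_def by blast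
  then have bal_b: "mu z * Q z b + (\<Sum>a\<in>W. mu a * Q a b) = mu b * (Q b z + (\<Sum>c\<in>W. Q b c))"
    using finW nin unfolding Vb by simp
  have "(\<Sum>a\<in>V - {z}. mu a * Q a z) = mu z * L"
    using bal z unfolding balanced_def L_def by blast
  then have bal_z: "mu b * Q b z + (\<Sum>a\<in>W. mu a * Q a z) = mu z * L"
    using finW nin unfolding Vz by simp
  have L: "L = Q z b + (\<Sum>c\<in>W. Q z c)"
    using finW nin unfolding L_def exit_rate_def Vz by simp
  have "(\<Sum>a\<in>W. mu a * eliminate V z Q a b)
      = L * (\<Sum>a\<in>W. mu a * Q a b) + Q z b * (\<Sum>a\<in>W. mu a * Q a z)"
    unfolding eliminate_def L_def[symmetric]
    by (simp add: algebra_simps sum.distrib sum_distrib_left)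
  also have "\<dots> = mu b * (L * (\<Sum>c\<in>W. Q b c) + Q b z * (\<Sum>c\<in>W. Q z c))"
    using bal_b bal_z L by algebra
  also have "\<dots> = mu b * exit_rate (V - {z}) (eliminate V z Q) b"
    unfolding exit_rate_def[of "V - {z}"] eliminate_def L_def[symmetric]
    by (simp add: W_def[symmetric] algebra_simps sum.distrib sum_distrib_left)
  finally show "(\<Sum>a\<in>V - {z} - {b}. mu a * eliminate V z Q a b) = mu b * exit_rate (V - {z}) (eliminate V z Q) b"
    by (simp add: W_def)
qed

lemma irreducible_on_eliminate:
  assumes fin: "finite V" and z: "z \<in> V" and irr: "irreducible_on V Q"
  shows "irreducible_on (V - {z}) (eliminate V z Q)"
proof (cases "V - {z} = {}")
  case False
  then obtain a where "a \<in> V" "a \<noteq> z" by blast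
  then have L: "0 < exit_rate V Q z" using exit_rate_pos[OF fin irr z] by blast
  have nn: "0 \<le> Q a b" if "a \<in> V" "b \<in> V" "a \<noteq> b" for a b
    using irreducible_on_nonneg[OF irr that] .
  let ?B = "{(u, v). u \<noteq> z \<and> v \<noteq> z \<and>
      ((u, v) \<in> pos_graph V Q \<or> (u, z) \<in> pos_graph V Q \<and> (z, v) \<in> pos_graph V Q)}"
  have "?B - Id \<subseteq> pos_graph (V - {z}) (eliminate V z Q)"
  proof
    fix e assume "e \<in> ?B - Id"
    then obtain u v where e: "e = (u, v)" and uv: "(u, v) \<in> ?B" "u \<noteq> v" by auto
    then have V: "u \<in> V - {z}" "v \<in> V - {z}" "u \<noteq> v" unfolding pos_graph_def by auto
    have "0 \<le> Q u v * exit_rate V Q z" "0 \<le> Q u z * Q z v"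
      using V z L nn by (auto intro!: mult_nonneg_nonneg)
    moreover have "0 < Q u v * exit_rate V Q z \<or> 0 < Q u z * Q z v"
      using uv(1) L unfolding pos_graph_def by auto
    ultimately show "e \<in> pos_graph (V - {z}) (eliminate V z Q)"
      unfolding e pos_graph_def eliminate_def using V by auto
  qed
  then have "(V - {z}) \<times> (V - {z}) \<subseteq> (pos_graph (V - {z}) (eliminate V z Q))\<^sup>*"
    using irr rtrancl_bypass[of _ _ "pos_graph V Q" z] rtrancl_mono[of "?B - Id"]
    unfolding irreducible_on_def rtrancl_r_diff_Id by blast
  moreover have "0 \<le> eliminate V z Q a b" if "a \<in> V - {z}" "b \<in> V - {z}" "a \<noteq> b" for a b
    unfolding eliminate_def using that z
    by (auto intro!: add_nonneg_nonneg mult_nonneg_nonneg nn exit_rate_nonneg[OF irr])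
  ultimately show ?thesis unfolding irreducible_on_def by blast
qed (auto simp: irreducible_on_def)

lemma lift_pos:
  assumes fin: "finite V" and irr: "irreducible_on V Q" and z: "z \<in> V" "V - {z} \<noteq> {}"
    and g: "\<And>b. b \<in> V - {z} \<Longrightarrow> 0 < g b" and a: "a \<in> V"
  shows "0 < lift V z Q g a"
proof -
  obtain y where y: "y \<in> V" "y \<noteq> z" using z(2) by blast
  show ?thesis
  proof (cases "a = z")
    case True
    obtain b where "b \<in> V - {z}" "0 < Q b z" using entrance_rate_pos[OF irr z(1) y] .
    then have "0 < (\<Sum>b\<in>V - {z}. g b * Q b z)"
      using fin g z(1) by (intro sum_pos2[of _ b]) (auto intro: mult_nonneg_nonneg less_imp_le irreducible_on_nonneg[OF irr])
    then show ?thesis unfolding lift_def using True by simp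
  next
    case False
    then show ?thesis
      unfolding lift_def using g a exit_rate_pos[OF fin irr z(1) y] by simp
  qed
qed

lemma balanced_eq_lift:
  assumes bal: "balanced V Q mu" and z: "z \<in> V" and L: "exit_rate V Q z \<noteq> 0"
    and g: "\<And>b. b \<in> V - {z} \<Longrightarrow> mu b = c * g b" and a: "a \<in> V"
  shows "mu a = c / exit_rate V Q z * lift V z Q g a"
proof (cases "a = z")
  case True
  have "mu z * exit_rate V Q z = (\<Sum>b\<in>V - {z}. mu b * Q b z)"
    using bal z unfolding balanced_def by simp
  also have "\<dots> = c * (\<Sum>b\<in>V - {z}. g b * Q b z)"
    by (simp add: g sum_distrib_left mult.assoc)
  finally show ?thesis unfolding lift_def using True L by (simp add: field_simps)
qed (use g a L in \<open>simp add: lift_def\<close>)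

lemma balance_vector_pos:
  "distinct zs \<Longrightarrow> irreducible_on (set zs) Q \<Longrightarrow> a \<in> set zs \<Longrightarrow> 0 < balance_vector zs Q a"
proof (induction zs Q arbitrary: a rule: balance_vector.induct)
  case (3 z y zs Q)
  let ?V = "set (z # y # zs)"
  have V: "?V - {z} = set (y # zs)" using "3.prems"(1) by auto
  have "irreducible_on (set (y # zs)) (eliminate ?V z Q)"
    using irreducible_on_eliminate[OF finite_set list.set_intros(1) "3.prems"(2)] V by simp
  then have "0 < balance_vector (y # zs) (eliminate ?V z Q) b" if "b \<in> ?V - {z}" for b
    using "3.IH" "3.prems"(1) that V by simp
  then show ?case
    unfolding balance_vector.simps using "3.prems"(3) V
    by (intro lift_pos[OF finite_set "3.prems"(2)]) auto
qed simp_all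

lemma balanced_imp_eq_balance_vector:
  "distinct zs \<Longrightarrow> irreducible_on (set zs) Q \<Longrightarrow> balanced (set zs) Q mu \<Longrightarrow>
    \<exists>c. \<forall>a\<in>set zs. mu a = c * balance_vector zs Q a"
proof (induction zs Q rule: balance_vector.induct)
  case (3 z y zs Q)
  let ?V = "set (z # y # zs)"
  have V: "?V - {z} = set (y # zs)" using "3.prems"(1) by auto
  have "irreducible_on (set (y # zs)) (eliminate ?V z Q)"
    using irreducible_on_eliminate[OF finite_set list.set_intros(1) "3.prems"(2)] V by simp
  moreover have "balanced (set (y # zs)) (eliminate ?V z Q) mu"
    using balanced_eliminate[OF finite_set list.set_intros(1) "3.prems"(3)] V by simp
  ultimately obtain c where "\<And>b. b \<in> ?V - {z} \<Longrightarrow> mu b = c * balance_vector (y # zs) (eliminate ?V z Q) b"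
    using "3.IH" "3.prems"(1) V by auto
  moreover have "exit_rate ?V Q z \<noteq> 0"
    using exit_rate_pos[OF _ "3.prems"(2), of z y] "3.prems"(1) by auto
  ultimately have "\<forall>a\<in>?V. mu a = c / exit_rate ?V Q z * balance_vector (z # y # zs) Q a"
    using balanced_eq_lift[OF "3.prems"(3) list.set_intros(1)] by simp
  then show ?case by blast
qed auto

lemma pos_rate_form_balance_vector:
  assumes "distinct zs"
    and "\<And>a b. a \<in> set zs \<Longrightarrow> b \<in> set zs \<Longrightarrow> a \<noteq> b \<Longrightarrow> pos_rate_form R d (\<lambda>N. P N a b)"
  shows "\<exists>m. \<forall>a\<in>set zs. pos_rate_form R m (\<lambda>N. balance_vector zs (P N) a)"
  using assms
proof (induction zs arbitrary: d P rule: induct_list012)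
  case (2 x)
  then show ?case using pos_rate_form_one by auto
next
  case (3 z y zs)
  let ?V = "set (z # y # zs)"
  have V: "?V - {z} = set (y # zs)" using "3.prems"(1) by auto
  have exit: "pos_rate_form R d (\<lambda>N. exit_rate ?V (P N) z)"
    unfolding exit_rate_def by (intro pos_rate_form_sum "3.prems"(2)) auto
  have "pos_rate_form R (d + d) (\<lambda>N. eliminate ?V z (P N) a b)"
    if "a \<in> set (y # zs)" "b \<in> set (y # zs)" "a \<noteq> b" for a b
    unfolding eliminate_def using that "3.prems"(1)
    by (intro pos_rate_form.add pos_rate_form_mult exit "3.prems"(2)) auto
  then obtain m where m: "\<forall>a\<in>set (y # zs). pos_rate_form R m (\<lambda>N. balance_vector (y # zs) (eliminate ?V z (P N)) a)"
    using "3.IH"(2)[of "d + d" "\<lambda>N. eliminate ?V z (P N)"] "3.prems"(1) by auto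
  have "pos_rate_form R (m + d) (\<lambda>N. balance_vector (z # y # zs) (P N) a)" if "a \<in> ?V" for a
  proof (cases "a = z")
    case True
    have "pos_rate_form R (m + d)
        (\<lambda>N. \<Sum>b\<in>set (y # zs). balance_vector (y # zs) (eliminate ?V z (P N)) b * P N b z)"
      using m "3.prems" by (intro pos_rate_form_sum pos_rate_form_mult) auto
    then show ?thesis using True V by (simp add: lift_def)
  next
    case False
    have "pos_rate_form R (m + d)
        (\<lambda>N. balance_vector (y # zs) (eliminate ?V z (P N)) a * exit_rate ?V (P N) z)"
      using m that False by (intro pos_rate_form_mult exit) auto
    then show ?thesis using False by (simp add: lift_def)
  qed
  then show ?case by blast
qed simp

lemma irreducible_rates_imp_irreducible_on:
  "irreducible_rates R \<Longrightarrow> irreducible_on UNIV (R N)"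
proof -
  have "pos_graph UNIV (R N) = {(a, b). a \<noteq> b \<and> R N a b > 0}"
    unfolding pos_graph_def by auto
  then show "irreducible_rates R \<Longrightarrow> irreducible_on UNIV (R N)"
    unfolding irreducible_rates_def irreducible_on_def by auto
qed

lemma invariant_prob_eq_normalized_balance_vector:
  fixes R :: "nat \<Rightarrow> 'a::finite \<Rightarrow> 'a \<Rightarrow> real"
  assumes irr: "irreducible_rates R" and inv: "invariant_prob R mu"
    and zs: "distinct zs" "set zs = UNIV"
  shows "mu N a = balance_vector zs (R N) a / (\<Sum>b\<in>UNIV. balance_vector zs (R N) b)"
proof -
  have irr_on: "irreducible_on UNIV (R N)" by (rule irreducible_rates_imp_irreducible_on[OF irr])
  have "balanced UNIV (R N) (mu N)"
    using inv unfolding invariant_prob_def balanced_def exit_rate_def holding_rate_def by blast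
  then obtain c where c: "\<And>a. mu N a = c * balance_vector zs (R N) a"
    using balanced_imp_eq_balance_vector[OF zs(1)] irr_on unfolding zs(2) by blast
  have "(\<Sum>b\<in>UNIV. mu N b) = 1" using inv unfolding invariant_prob_def by blast
  then have "c * (\<Sum>b\<in>UNIV. balance_vector zs (R N) b) = 1" by (simp add: c sum_distrib_left)
  moreover have "0 < (\<Sum>b\<in>UNIV. balance_vector zs (R N) b)"
    using balance_vector_pos[OF zs(1)] irr_on zs(2) by (simp add: sum_pos)
  ultimately show ?thesis by (simp add: c field_simps)
qed

lemma invariant_prob_pos:
  fixes R :: "nat \<Rightarrow> 'a::finite \<Rightarrow> 'a \<Rightarrow> real"
  assumes irr: "irreducible_rates R" and inv: "invariant_prob R mu"
  shows "0 < mu N a"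
proof -
  obtain zs :: "'a list" where zs: "distinct zs" "set zs = UNIV"
    using finite_distinct_list[of "UNIV :: 'a set"] by auto
  have "0 < balance_vector zs (R N) b" for b
    using balance_vector_pos[OF zs(1)] irreducible_rates_imp_irreducible_on[OF irr] zs(2) by simp
  then show ?thesis
    unfolding invariant_prob_eq_normalized_balance_vector[OF irr inv zs] by (simp add: sum_pos)
qed

lemma invariant_prob_ratio_tendsto_or_at_top:
  fixes R :: "nat \<Rightarrow> 'a::finite \<Rightarrow> 'a \<Rightarrow> real"
  assumes irr: "irreducible_rates R" and inv: "invariant_prob R mu" and A: "assumption_A R"
  shows "(\<exists>L. (\<lambda>N. mu N a / mu N b) \<longlonglongrightarrow> L) \<or> filterlim (\<lambda>N. mu N a / mu N b) at_top sequentially"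
proof -
  obtain zs :: "'a list" where zs: "distinct zs" "set zs = UNIV"
    using finite_distinct_list[of "UNIV :: 'a set"] by auto
  let ?f = "\<lambda>a N. balance_vector zs (R N) a"
  have "\<exists>m. \<forall>a\<in>set zs. pos_rate_form R m (?f a)"
    by (rule pos_rate_form_balance_vector[OF zs(1)]) (rule pos_rate_form_rate_assumption_A[OF A])
  then obtain m where m: "\<And>a. pos_rate_form R m (?f a)" unfolding zs(2) by blast
  have pos: "0 < ?f a N" for a N
    using balance_vector_pos[OF zs(1)] irreducible_rates_imp_irreducible_on[OF irr] zs(2) by simp
  then have "?f a \<noteq> (\<lambda>N. 0)" for a by (metis less_irrefl)
  then have "(\<exists>L. (\<lambda>N. ?f a N / ?f b N) \<longlonglongrightarrow> L) \<or> filterlim (\<lambda>N. ?f a N / ?f b N) at_top sequentially"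
    by (intro pos_rate_form_ratio_tendsto_or_at_top[OF A m _ m])
  moreover have "mu N a / mu N b = ?f a N / ?f b N" for N
  proof -
    have "0 < (\<Sum>c\<in>UNIV. ?f c N)" by (simp add: pos sum_pos)
    then show ?thesis by (simp add: invariant_prob_eq_normalized_balance_vector[OF irr inv zs])
  qed
  ultimately show ?thesis by simp
qed

section \<open>Hitting distributions of a discrete chain\<close>

definition stochastic :: "('a::finite \<Rightarrow> 'a \<Rightarrow> real) \<Rightarrow> bool" where
  "stochastic p \<longleftrightarrow> (\<forall>y w. 0 \<le> p y w) \<and> (\<forall>y. (\<Sum>w\<in>UNIV. p y w) = 1)"

definition hitting_distribution :: "('a::finite \<Rightarrow> 'a \<Rightarrow> real) \<Rightarrow> 'a set \<Rightarrow> 'a \<Rightarrow> 'a \<Rightarrow> real" where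
  "hitting_distribution p F z x = (\<Sum>n. first_entr p F n z x)"

lemma first_entr_nonneg: "stochastic p \<Longrightarrow> 0 \<le> first_entr p F n z x"
  unfolding stochastic_def
  by (induction n arbitrary: z) (auto intro!: sum_nonneg mult_nonneg_nonneg)

lemma first_entr_partial_sums_le_1:
  assumes p: "stochastic p"
  shows "(\<Sum>x\<in>UNIV. \<Sum>n<K. first_entr p F n z x) \<le> 1"
proof (induction K arbitrary: z)
  case (Suc K)
  have split: "(\<Sum>n<Suc K. first_entr p F n z x) =
      first_entr p F 0 z x + (\<Sum>n<K. first_entr p F (Suc n) z x)" for x
    by (rule sum.lessThan_Suc_shift)
  show ?case
  proof (cases "z \<in> F")
    case True
    then show ?thesis unfolding split by simp
  next
    case False
    have "(\<Sum>x\<in>UNIV. \<Sum>n<Suc K. first_entr p F n z x) =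
        (\<Sum>x\<in>UNIV. \<Sum>n<K. \<Sum>y\<in>UNIV. p z y * first_entr p F n y x)"
      unfolding split using False by simp
    also have "\<dots> = (\<Sum>x\<in>UNIV. \<Sum>y\<in>UNIV. \<Sum>n<K. p z y * first_entr p F n y x)"
      by (intro sum.cong refl sum.swap)
    also have "\<dots> = (\<Sum>y\<in>UNIV. p z y * (\<Sum>x\<in>UNIV. \<Sum>n<K. first_entr p F n y x))"
      by (subst sum.swap) (simp add: sum_distrib_left)
    also have "\<dots> \<le> (\<Sum>y\<in>UNIV. p z y * 1)"
      using Suc.IH p unfolding stochastic_def by (intro sum_mono mult_left_mono) auto
    also have "\<dots> = 1" using p unfolding stochastic_def by simp
    finally show ?thesis .
  qed
qed simp

lemma summable_first_entr:
  assumes p: "stochastic p"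
  shows "summable (\<lambda>n. first_entr p F n z x)"
proof (rule summableI_nonneg_bounded)
  show "0 \<le> first_entr p F n z x" for n using first_entr_nonneg[OF p] .
  have "(\<Sum>n<K. first_entr p F n z x) \<le> (\<Sum>x'\<in>UNIV. \<Sum>n<K. first_entr p F n z x')" for K
    by (rule member_le_sum) (auto intro!: sum_nonneg first_entr_nonneg[OF p])
  then show "(\<Sum>n<K. first_entr p F n z x) \<le> 1" for K
    using first_entr_partial_sums_le_1[OF p] order_trans by blast
qed

lemma hitting_distribution_nonneg: "stochastic p \<Longrightarrow> 0 \<le> hitting_distribution p F z x"
  unfolding hitting_distribution_def
  by (intro suminf_nonneg summable_first_entr first_entr_nonneg)

lemma hitting_distribution_split_head:
  assumes "stochastic p"
  shows "hitting_distribution p F z x = first_entr p F 0 z x + (\<Sum>n. first_entr p F (Suc n) z x)"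
  unfolding hitting_distribution_def using suminf_split_head[OF summable_first_entr[OF assms]] by simp

lemma hitting_distribution_in:
  "stochastic p \<Longrightarrow> z \<in> F \<Longrightarrow> hitting_distribution p F z x = (if z = x then 1 else 0)"
  by (simp add: hitting_distribution_split_head)

lemma hitting_distribution_out:
  assumes p: "stochastic p" and z: "z \<notin> F"
  shows "hitting_distribution p F z x = (\<Sum>y\<in>UNIV. p z y * hitting_distribution p F y x)"
proof -
  have "hitting_distribution p F z x = (\<Sum>n. \<Sum>y\<in>UNIV. p z y * first_entr p F n y x)"
    using z by (simp add: hitting_distribution_split_head[OF p])
  also have "\<dots> = (\<Sum>y\<in>UNIV. \<Sum>n. p z y * first_entr p F n y x)"
    by (rule suminf_sum) (intro summable_mult summable_first_entr[OF p])
  also have "\<dots> = (\<Sum>y\<in>UNIV. p z y * hitting_distribution p F y x)"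
    unfolding hitting_distribution_def by (intro sum.cong refl suminf_mult summable_first_entr[OF p])
  finally show ?thesis .
qed

lemma harmonic_max_propagates:
  fixes u :: "'a::finite \<Rightarrow> real"
  assumes p: "stochastic p" and le: "\<And>y. u y \<le> M"
    and harmonic: "\<And>y. u y = M \<Longrightarrow> u y = (\<Sum>w\<in>UNIV. p y w * u w)"
    and path: "(y0, y) \<in> {(a, b). 0 < p a b}\<^sup>*" and y0: "u y0 = M"
  shows "u y = M"
  using path
proof (induction rule: rtrancl_induct)
  case (step y w)
  then have "(\<Sum>w'\<in>UNIV. p y w' * (M - u w')) = 0"
    using p harmonic[of y] unfolding stochastic_def
    by (simp add: right_diff_distrib sum_subtractf sum_distrib_right[symmetric])
  moreover have "0 \<le> p y w' * (M - u w')" for w'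
    using p le unfolding stochastic_def by simp
  ultimately have "p y w * (M - u w) = 0" by (simp add: sum_nonneg_eq_0_iff)
  then show ?case using step.hyps(2) by simp
qed (rule y0)

text \<open>One minus the total hitting mass vanishes on F and is harmonic off F, so by the maximum
  principle it cannot be positive anywhere.\<close>
lemma hitting_distribution_total_ge_1:
  assumes p: "stochastic p" and F: "F \<noteq> {}" and irr: "\<forall>a b. (a, b) \<in> {(a, b). 0 < p a b}\<^sup>*"
  shows "1 \<le> (\<Sum>x\<in>F. hitting_distribution p F z x)"
proof (rule ccontr)
  assume less: "\<not> 1 \<le> (\<Sum>x\<in>F. hitting_distribution p F z x)"
  define u where "u y = 1 - (\<Sum>x\<in>F. hitting_distribution p F y x)" for y
  have u_F: "u y = 0" if "y \<in> F" for y
    unfolding u_def using that by (simp add: hitting_distribution_in[OF p])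
  have u_harmonic: "u y = (\<Sum>w\<in>UNIV. p y w * u w)" if "y \<notin> F" for y
  proof -
    have "(\<Sum>x\<in>F. hitting_distribution p F y x) =
        (\<Sum>x\<in>F. \<Sum>w\<in>UNIV. p y w * hitting_distribution p F w x)"
      using hitting_distribution_out[OF p that] by simp
    also have "\<dots> = (\<Sum>w\<in>UNIV. p y w * (\<Sum>x\<in>F. hitting_distribution p F w x))"
      by (subst sum.swap) (simp add: sum_distrib_left)
    finally show ?thesis
      using p unfolding u_def stochastic_def by (simp add: right_diff_distrib sum_subtractf)
  qed
  define M where "M = Max (range u)"
  have u_le: "u y \<le> M" for y unfolding M_def by (rule Max_ge) auto
  have "M \<in> range u" unfolding M_def by (rule Max_in) auto
  then obtain y0 where y0: "u y0 = M" by blast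
  have "0 < M" using less u_le[of z] unfolding u_def by simp
  then have harmonic: "u y = (\<Sum>w\<in>UNIV. p y w * u w)" if "u y = M" for y
    using that u_F u_harmonic by force
  have "u x = M" for x using harmonic_max_propagates[of p u M, OF p u_le harmonic] irr y0 by blast
  moreover obtain x where "x \<in> F" using F by blast
  ultimately show False using u_F \<open>0 < M\<close> by force
qed

section \<open>Flows of the trace process\<close>

lemma holding_rate_pos:
  fixes R :: "nat \<Rightarrow> 'a::finite \<Rightarrow> 'a \<Rightarrow> real"
  assumes irr: "irreducible_rates R" and "x \<noteq> y"
  shows "0 < holding_rate R N y"
proof -
  have "(y, x) \<in> {(a, b). a \<noteq> b \<and> R N a b > 0}\<^sup>*" using irr unfolding irreducible_rates_def by blast
  then obtain w where "(y, w) \<in> {(a, b). a \<noteq> b \<and> R N a b > 0}"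
    using \<open>x \<noteq> y\<close> by (blast elim: converse_rtranclE)
  then show ?thesis unfolding holding_rate_def
    using irr unfolding irreducible_rates_def by (intro sum_pos2[of _ w]) auto
qed

lemma holding_rate_mult_jump_prob:
  "0 < holding_rate R N y \<Longrightarrow> holding_rate R N y * jump_prob R N y w = (if w = y then 0 else R N y w)"
  unfolding jump_prob_def by simp

lemma stochastic_jump_prob:
  fixes R :: "nat \<Rightarrow> 'a::finite \<Rightarrow> 'a \<Rightarrow> real"
  assumes irr: "irreducible_rates R" and hp: "\<And>y. 0 < holding_rate R N y"
  shows "stochastic (jump_prob R N)"
proof -
  have "(\<Sum>w\<in>UNIV. jump_prob R N y w) = 1" for y
  proof -
    have "(\<Sum>w\<in>UNIV. jump_prob R N y w) = (\<Sum>w\<in>UNIV - {y}. R N y w / holding_rate R N y)"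
      unfolding jump_prob_def by (simp add: sum.If_cases Diff_eq)
    also have "\<dots> = 1"
      using hp[of y] unfolding holding_rate_def by (simp add: sum_divide_distrib[symmetric])
    finally show ?thesis .
  qed
  moreover have "0 \<le> jump_prob R N y w" for y w
    using irr hp[of y] unfolding irreducible_rates_def jump_prob_def by (simp add: less_imp_le)
  ultimately show ?thesis unfolding stochastic_def by blast
qed

lemma jump_prob_irreducible:
  fixes R :: "nat \<Rightarrow> 'a::finite \<Rightarrow> 'a \<Rightarrow> real"
  assumes irr: "irreducible_rates R" and hp: "\<And>y. 0 < holding_rate R N y"
  shows "\<forall>a b. (a, b) \<in> {(a, b). 0 < jump_prob R N a b}\<^sup>*"
proof -
  have "{(a, b). a \<noteq> b \<and> R N a b > 0} \<subseteq> {(a, b). 0 < jump_prob R N a b}"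
    using hp unfolding jump_prob_def by auto
  then show ?thesis using irr rtrancl_mono unfolding irreducible_rates_def by blast
qed

text \<open>Jump rates of the trace on F, return rates to the starting state included.\<close>
definition trace_kernel :: "(nat \<Rightarrow> 'a::finite \<Rightarrow> 'a \<Rightarrow> real) \<Rightarrow> nat \<Rightarrow> 'a set \<Rightarrow> 'a \<Rightarrow> 'a \<Rightarrow> real" where
  "trace_kernel R N F eta xi =
     holding_rate R N eta * (\<Sum>y\<in>UNIV. jump_prob R N eta y * hitting_distribution (jump_prob R N) F y xi)"

lemma trace_rate_eq_trace_kernel:
  "trace_rate R N F eta xi = (if eta = xi then 0 else trace_kernel R N F eta xi)"
  unfolding trace_rate_def trace_kernel_def hit_at_def hitting_distribution_def ..

lemma trace_kernel_nonneg:
  fixes R :: "nat \<Rightarrow> 'a::finite \<Rightarrow> 'a \<Rightarrow> real"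
  assumes irr: "irreducible_rates R" and hp: "\<And>y. 0 < holding_rate R N y"
  shows "0 \<le> trace_kernel R N F eta xi"
  using stochastic_jump_prob[OF irr hp] hp[of eta] unfolding trace_kernel_def
  by (intro mult_nonneg_nonneg sum_nonneg hitting_distribution_nonneg)
    (auto simp: stochastic_def intro: less_imp_le)

lemma trace_kernel_row_sum_ge:
  fixes R :: "nat \<Rightarrow> 'a::finite \<Rightarrow> 'a \<Rightarrow> real"
  assumes irr: "irreducible_rates R" and hp: "\<And>y. 0 < holding_rate R N y" and F: "F \<noteq> {}"
  shows "holding_rate R N eta \<le> (\<Sum>xi\<in>F. trace_kernel R N F eta xi)"
proof -
  let ?p = "jump_prob R N"
  have p: "stochastic ?p" by (rule stochastic_jump_prob[OF irr hp])
  have "holding_rate R N eta = holding_rate R N eta * (\<Sum>y\<in>UNIV. ?p eta y * 1)"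
    using p unfolding stochastic_def by simp
  also have "\<dots> \<le> holding_rate R N eta * (\<Sum>y\<in>UNIV. ?p eta y * (\<Sum>xi\<in>F. hitting_distribution ?p F y xi))"
    using p hp[of eta] hitting_distribution_total_ge_1[OF p F jump_prob_irreducible[OF irr hp]]
    unfolding stochastic_def by (intro mult_left_mono sum_mono) (auto simp: less_imp_le)
  also have "\<dots> = (\<Sum>xi\<in>F. trace_kernel R N F eta xi)"
    unfolding trace_kernel_def by (simp add: sum_distrib_left sum.swap[of _ F])
  finally show ?thesis .
qed

lemma trace_kernel_balance:
  fixes R :: "nat \<Rightarrow> 'a::finite \<Rightarrow> 'a \<Rightarrow> real"
  assumes irr: "irreducible_rates R" and inv: "invariant_prob R mu"
    and hp: "\<And>y. 0 < holding_rate R N y" and xi: "xi \<in> F"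
  shows "(\<Sum>eta\<in>F. mu N eta * trace_kernel R N F eta xi) = mu N xi * holding_rate R N xi"
proof -
  let ?p = "jump_prob R N" and ?lam = "holding_rate R N"
  let ?h = "\<lambda>y. hitting_distribution ?p F y xi"
  have p: "stochastic ?p" by (rule stochastic_jump_prob[OF irr hp])
  have inflow: "(\<Sum>eta\<in>UNIV. mu N eta * (?lam eta * ?p eta y)) = mu N y * ?lam y" for y
  proof -
    have "(\<Sum>eta\<in>UNIV. mu N eta * (?lam eta * ?p eta y)) =
        (\<Sum>eta\<in>UNIV. if eta = y then 0 else mu N eta * R N eta y)"
      using hp by (intro sum.cong) (auto simp: holding_rate_mult_jump_prob)
    also have "\<dots> = (\<Sum>eta\<in>UNIV - {y}. mu N eta * R N eta y)"
      by (simp add: sum.If_cases Diff_eq)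
    finally show ?thesis using inv unfolding invariant_prob_def by simp
  qed
  have "(\<Sum>eta\<in>UNIV. mu N eta * trace_kernel R N F eta xi) =
      (\<Sum>eta\<in>UNIV. \<Sum>y\<in>UNIV. mu N eta * (?lam eta * ?p eta y) * ?h y)"
    unfolding trace_kernel_def by (simp add: sum_distrib_left mult_ac)
  also have "\<dots> = (\<Sum>y\<in>UNIV. mu N y * ?lam y * ?h y)"
    by (subst sum.swap) (simp add: sum_distrib_right[symmetric] inflow)
  finally have total: "(\<Sum>eta\<in>UNIV. mu N eta * trace_kernel R N F eta xi) =
      (\<Sum>y\<in>UNIV. mu N y * ?lam y * ?h y)" .
  have outside: "mu N eta * trace_kernel R N F eta xi = mu N eta * ?lam eta * ?h eta" if "eta \<notin> F" for eta
    unfolding trace_kernel_def using hitting_distribution_out[OF p that] by simp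
  have "(\<Sum>y\<in>F. mu N y * ?lam y * ?h y) = (\<Sum>y\<in>F. if y = xi then mu N y * ?lam y else 0)"
    by (intro sum.cong refl) (simp add: hitting_distribution_in[OF p])
  also have "\<dots> = mu N xi * ?lam xi" using xi by (simp add: sum.delta')
  finally show ?thesis
    using total sum.subset_diff[of F UNIV] outside by (simp add: sum.subset_diff[of F UNIV])
qed

lemma flow_into_le_flow_out:
  fixes T :: "'a \<Rightarrow> 'a \<Rightarrow> real"
  assumes F: "finite F" and X: "X \<subseteq> F" and mu: "\<And>eta. eta \<in> F \<Longrightarrow> 0 \<le> mu eta"
    and bal: "\<And>xi. xi \<in> F \<Longrightarrow> (\<Sum>eta\<in>F. mu eta * T eta xi) = mu xi * lam xi"
    and row: "\<And>eta. eta \<in> F \<Longrightarrow> lam eta \<le> (\<Sum>xi\<in>F. T eta xi)"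
  shows "(\<Sum>eta\<in>F - X. mu eta * (\<Sum>xi\<in>X. T eta xi)) \<le> (\<Sum>eta\<in>X. mu eta * (\<Sum>xi\<in>F - X. T eta xi))"
proof -
  have split: "(\<Sum>eta\<in>F. g eta) = (\<Sum>eta\<in>F - X. g eta) + (\<Sum>eta\<in>X. g eta)" for g :: "'a \<Rightarrow> real"
    using sum.subset_diff[OF X F] .
  have "(\<Sum>eta\<in>F - X. mu eta * (\<Sum>xi\<in>X. T eta xi)) + (\<Sum>eta\<in>X. mu eta * (\<Sum>xi\<in>X. T eta xi))
      = (\<Sum>xi\<in>X. \<Sum>eta\<in>F. mu eta * T eta xi)"
    by (subst sum.swap) (simp add: split[symmetric] sum_distrib_left)
  also have "\<dots> = (\<Sum>xi\<in>X. mu xi * lam xi)" using X by (intro sum.cong refl bal) auto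
  also have "\<dots> \<le> (\<Sum>eta\<in>X. mu eta * (\<Sum>xi\<in>F. T eta xi))"
    using X by (intro sum_mono mult_left_mono row mu) auto
  also have "\<dots> = (\<Sum>eta\<in>X. mu eta * (\<Sum>xi\<in>X. T eta xi)) + (\<Sum>eta\<in>X. mu eta * (\<Sum>xi\<in>F - X. T eta xi))"
    by (simp add: split distrib_left sum.distrib)
  finally show ?thesis by simp
qed

lemma trace_flow_into_le_flow_out:
  fixes R :: "nat \<Rightarrow> 'a::finite \<Rightarrow> 'a \<Rightarrow> real"
  assumes irr: "irreducible_rates R" and inv: "invariant_prob R mu"
    and hp: "\<And>y. 0 < holding_rate R N y" and "F \<noteq> {}" "X \<subseteq> F"
  shows "(\<Sum>eta\<in>F - X. mu N eta * (\<Sum>xi\<in>X. trace_rate R N F eta xi))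
    \<le> (\<Sum>eta\<in>X. mu N eta * (\<Sum>xi\<in>F - X. trace_rate R N F eta xi))"
proof -
  have "(\<Sum>eta\<in>F - X. mu N eta * (\<Sum>xi\<in>X. trace_kernel R N F eta xi))
      \<le> (\<Sum>eta\<in>X. mu N eta * (\<Sum>xi\<in>F - X. trace_kernel R N F eta xi))"
    using assms inv[unfolded invariant_prob_def]
    by (intro flow_into_le_flow_out[where lam = "holding_rate R N"] trace_kernel_balance
        trace_kernel_row_sum_ge) auto
  moreover have "(\<Sum>xi\<in>B. trace_rate R N F eta xi) = (\<Sum>xi\<in>B. trace_kernel R N F eta xi)"
    if "eta \<notin> B" for eta B
    using that by (intro sum.cong refl) (auto simp: trace_rate_eq_trace_kernel)
  ultimately show ?thesis by simp
qed

section \<open>Comparison of block masses\<close>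

lemma muS_mult_mean_rate:
  fixes mu :: "nat \<Rightarrow> 'a::finite \<Rightarrow> real"
  assumes mu: "\<And>eta. 0 \<le> mu N eta"
  shows "muS mu N X * mean_rate R mu N F X Y = (\<Sum>eta\<in>X. mu N eta * (\<Sum>xi\<in>Y. trace_rate R N F eta xi))"
proof (cases "muS mu N X = 0")
  case True
  then have "\<forall>eta\<in>X. mu N eta = 0" unfolding muS_def using mu by (simp add: sum_nonneg_eq_0_iff)
  then show ?thesis using True by simp
qed (simp add: mean_rate_def muS_def)

lemma block_flow_le:
  fixes R :: "nat \<Rightarrow> 'a::finite \<Rightarrow> 'a \<Rightarrow> real"
  assumes irr: "irreducible_rates R" and inv: "invariant_prob R mu"
    and part: "is_partition p F D" and hp: "\<And>y. 0 < holding_rate R N y"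
    and x: "x \<in> {1..p}" and y: "y \<in> {1..p}" and xy: "x \<noteq> y"
  shows "muS mu N (F y) * mean_rate R mu N (Fset p F) (F y) (F x)
    \<le> muS mu N (F x) * (\<Sum>z\<in>{1..p} - {x}. mean_rate R mu N (Fset p F) (F x) (F z))"
proof -
  let ?Fs = "Fset p F" and ?tr = "trace_rate R N (Fset p F)"
  have mu: "0 \<le> mu N eta" for eta using inv unfolding invariant_prob_def by blast
  have disj: "\<forall>a\<in>{1..p}. \<forall>b\<in>{1..p}. a \<noteq> b \<longrightarrow> F a \<inter> F b = {}"
    using part unfolding is_partition_def by blast
  have Fx: "F x \<subseteq> ?Fs" "F x \<noteq> {}" using x part unfolding Fset_def is_partition_def by auto
  have Fy: "F y \<subseteq> ?Fs - F x" using x y xy disj unfolding Fset_def by blast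
  have rest: "?Fs - F x = (\<Union>z\<in>{1..p} - {x}. F z)" using x disj unfolding Fset_def by blast
  have "muS mu N (F y) * mean_rate R mu N ?Fs (F y) (F x) = (\<Sum>eta\<in>F y. mu N eta * (\<Sum>xi\<in>F x. ?tr eta xi))"
    by (rule muS_mult_mean_rate[of mu N, OF mu])
  also have "\<dots> \<le> (\<Sum>eta\<in>?Fs - F x. mu N eta * (\<Sum>xi\<in>F x. ?tr eta xi))"
    using Fy irr hp by (intro sum_mono2 mult_nonneg_nonneg sum_nonneg mu)
      (auto simp: trace_rate_eq_trace_kernel trace_kernel_nonneg)
  also have "\<dots> \<le> (\<Sum>eta\<in>F x. mu N eta * (\<Sum>xi\<in>?Fs - F x. ?tr eta xi))"
    using Fx by (intro trace_flow_into_le_flow_out[OF irr inv hp]) auto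
  also have "\<dots> = (\<Sum>z\<in>{1..p} - {x}. \<Sum>eta\<in>F x. mu N eta * (\<Sum>xi\<in>F z. ?tr eta xi))"
    unfolding rest using disj x
    by (subst sum.UNION_disjoint) (auto simp: sum_distrib_left intro: sum.swap)
  also have "\<dots> = muS mu N (F x) * (\<Sum>z\<in>{1..p} - {x}. mean_rate R mu N ?Fs (F x) (F z))"
    by (simp add: sum_distrib_left muS_mult_mean_rate[of mu N, OF mu])
  finally show ?thesis .
qed

lemma H1_tendsto_rF:
  assumes h1: "H1 R mu p F b" and "x \<in> {1..p}" "y \<in> {1..p}" "x \<noteq> y"
  shows "(\<lambda>N. b N * mean_rate R mu N (Fset p F) (F x) (F y)) \<longlonglongrightarrow> rF R mu p F b x y"
proof -
  have "\<forall>x\<in>{1..p}. \<forall>y\<in>{1..p}. x \<noteq> y \<longrightarrow>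
      (\<exists>r. 0 \<le> r \<and> (\<lambda>N. b N * mean_rate R mu N (Fset p F) (F x) (F y)) \<longlonglongrightarrow> r)"
    using h1 unfolding H1_def by (rule conjunct1)
  then obtain r where "(\<lambda>N. b N * mean_rate R mu N (Fset p F) (F x) (F y)) \<longlonglongrightarrow> r"
    using assms(2-4) by blast
  then show ?thesis unfolding rF_def by (simp add: limI)
qed

lemma bigo_of_scaled_le:
  fixes u v a b :: "nat \<Rightarrow> real"
  assumes a: "a \<longlonglongrightarrow> r" "0 < r" and b: "b \<longlonglongrightarrow> S"
    and u: "\<And>N. 0 \<le> u N" and v: "\<And>N. 0 \<le> v N" and le: "\<And>N. u N * a N \<le> v N * b N"
  shows "u \<in> O(v)"
proof -
  have "eventually (\<lambda>N. r / 2 < a N) sequentially" using a by (intro order_tendstoD(1)) auto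
  moreover have "eventually (\<lambda>N. b N < S + 1) sequentially" using b by (intro order_tendstoD(2)) auto
  ultimately have "eventually (\<lambda>N. norm (u N) \<le> (2 * (S + 1) / r) * norm (v N)) sequentially"
  proof eventually_elim
    case (elim N)
    have "u N * (r / 2) \<le> u N * a N" using elim(1) u by (intro mult_left_mono) auto
    also have "\<dots> \<le> v N * (S + 1)"
      using le[of N] mult_left_mono[OF less_imp_le[OF elim(2)] v[of N]] by linarith
    finally have "u N \<le> v N * (S + 1) / (r / 2)" using a(2) by (simp add: pos_le_divide_eq)
    also have "\<dots> = (2 * (S + 1) / r) * v N" by simp
    finally show ?case using u v by simp
  qed
  then show ?thesis by (rule bigoI)
qed

lemma rF_pos_imp_bigo:
  fixes R :: "nat \<Rightarrow> 'a::finite \<Rightarrow> 'a \<Rightarrow> real"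
  assumes irr: "irreducible_rates R" and inv: "invariant_prob R mu"
    and part: "is_partition p F D" and h1: "H1 R mu p F beta"
    and hp: "\<And>N y. 0 < holding_rate R N y" and beta: "\<forall>N. 0 < beta N"
    and x: "x \<in> {1..p}" and y: "y \<in> {1..p}" and xy: "x \<noteq> y"
    and r: "0 < rF R mu p F beta y x"
  shows "(\<lambda>N. muS mu N (F y)) \<in> O(\<lambda>N. muS mu N (F x))"
proof (rule bigo_of_scaled_le)
  let ?Fs = "Fset p F"
  show "(\<lambda>N. beta N * mean_rate R mu N ?Fs (F y) (F x)) \<longlonglongrightarrow> rF R mu p F beta y x"
    using H1_tendsto_rF[OF h1 y x] xy by simp
  show "(\<lambda>N. \<Sum>z\<in>{1..p} - {x}. beta N * mean_rate R mu N ?Fs (F x) (F z))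
      \<longlonglongrightarrow> (\<Sum>z\<in>{1..p} - {x}. rF R mu p F beta x z)"
    using x by (intro tendsto_sum H1_tendsto_rF[OF h1]) auto
  have "0 \<le> muS mu N A" for N A
    using inv unfolding invariant_prob_def muS_def by (simp add: sum_nonneg)
  then show "0 \<le> muS mu N (F y)" "0 \<le> muS mu N (F x)" for N by blast+
  show "muS mu N (F y) * (beta N * mean_rate R mu N ?Fs (F y) (F x))
      \<le> muS mu N (F x) * (\<Sum>z\<in>{1..p} - {x}. beta N * mean_rate R mu N ?Fs (F x) (F z))" for N
    using mult_left_mono[OF block_flow_le[OF irr inv part hp x y xy], of "beta N"] beta
    by (simp add: sum_distrib_left mult.left_commute less_imp_le)
qed (rule r)

lemma comm_class_muS_bigtheta:
  fixes R :: "nat \<Rightarrow> 'a::finite \<Rightarrow> 'a \<Rightarrow> real"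
  assumes irr: "irreducible_rates R" and inv: "invariant_prob R mu"
    and part: "is_partition p F D" and h1: "H1 R mu p F beta"
    and hp: "\<And>N y. 0 < holding_rate R N y" and beta: "\<forall>N. 0 < beta N"
    and cls: "comm_class p (rF R mu p F beta) C" and x: "x \<in> C" and y: "y \<in> C"
  shows "(\<lambda>N. muS mu N (F x)) \<in> \<Theta>(\<lambda>N. muS mu N (F y))"
proof -
  define E where "E = {(x, y). x \<in> {1..p} \<and> y \<in> {1..p} \<and> x \<noteq> y \<and> rF R mu p F beta x y > 0}"
  have path: "(\<lambda>N. muS mu N (F a)) \<in> O(\<lambda>N. muS mu N (F b))" if "(a, b) \<in> E\<^sup>*" for a b
    using that
  proof (induction rule: rtrancl_induct)
    case (step b c)
    then have "(\<lambda>N. muS mu N (F b)) \<in> O(\<lambda>N. muS mu N (F c))"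
      unfolding E_def by (intro rF_pos_imp_bigo[OF irr inv part h1 hp beta]) auto
    with step.IH show ?case by (rule landau_o.big_trans)
  qed simp
  obtain x0 where "C = {y \<in> {1..p}. (x0, y) \<in> E\<^sup>* \<and> (y, x0) \<in> E\<^sup>*}"
    using cls unfolding comm_class_def E_def Let_def by blast
  then have "(x, y) \<in> E\<^sup>*" "(y, x) \<in> E\<^sup>*" using x y by (blast intro: rtrancl_trans)+
  then show ?thesis using path by (simp add: bigtheta_def bigomega_iff_bigo)
qed

lemma H0_bigtheta:
  assumes h0: "H0 mu p F" and x: "x \<in> {1..p}" and eta: "eta \<in> F x"
  shows "(\<lambda>N. mu N eta) \<in> \<Theta>(\<lambda>N. muS mu N (F x))"
proof -
  obtain c where "0 < c" "(\<lambda>N. mu N eta / muS mu N (F x)) \<longlonglongrightarrow> c"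
    using h0 x eta unfolding H0_def by blast
  then show ?thesis by (intro bigthetaI_tendsto[of c]) auto
qed

lemma partition_holding_rate_pos:
  fixes R :: "nat \<Rightarrow> 'a::finite \<Rightarrow> 'a \<Rightarrow> real" and F :: "nat \<Rightarrow> 'a set"
  assumes irr: "irreducible_rates R" and part: "is_partition p F D" and p: "2 \<le> p"
  shows "0 < holding_rate R N y"
proof -
  have "F 1 \<noteq> {}" "F 2 \<noteq> {}" "F 1 \<inter> F 2 = {}"
    using part p unfolding is_partition_def by auto
  then obtain a b where "a \<in> F 1" "b \<in> F 2" "a \<noteq> b" by blast
  then show ?thesis using holding_rate_pos[OF irr, of a y] holding_rate_pos[OF irr, of b y] by blast
qed

lemma comm_class_states_bigtheta:
  fixes R :: "nat \<Rightarrow> 'a::finite \<Rightarrow> 'a \<Rightarrow> real"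
  assumes irr: "irreducible_rates R" and inv: "invariant_prob R mu"
    and part: "is_partition p F D" and h0: "H0 mu p F" and h1: "H1 R mu p F beta"
    and hp: "\<And>N y. 0 < holding_rate R N y" and beta: "\<forall>N. 0 < beta N"
    and cls: "comm_class p (rF R mu p F beta) C"
    and x: "x \<in> C" "eta \<in> F x" and y: "y \<in> C" "xi \<in> F y"
  shows "(\<lambda>N. mu N eta) \<in> \<Theta>(\<lambda>N. mu N xi)"
proof -
  have "C \<subseteq> {1..p}" using cls unfolding comm_class_def Let_def by auto
  then have "(\<lambda>N. mu N eta) \<in> \<Theta>(\<lambda>N. muS mu N (F x))" "(\<lambda>N. mu N xi) \<in> \<Theta>(\<lambda>N. muS mu N (F y))"
    using H0_bigtheta[OF h0] x y by auto
  moreover have "(\<lambda>N. muS mu N (F x)) \<in> \<Theta>(\<lambda>N. muS mu N (F y))"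
    by (rule comm_class_muS_bigtheta[OF irr inv part h1 hp beta cls x(1) y(1)])
  ultimately show ?thesis by (metis landau_theta.trans bigtheta_sym)
qed

theorem mainTheorem18:
  fixes R :: "nat \<Rightarrow> 'a::finite \<Rightarrow> 'a \<Rightarrow> real"
    and mu :: "nat \<Rightarrow> 'a \<Rightarrow> real"
    and p :: nat and F :: "nat \<Rightarrow> 'a set" and D :: "'a set"
    and beta_minus beta :: "nat \<Rightarrow> real"
    and C :: "nat set"
  assumes irr: "irreducible_rates R"
    and inv: "invariant_prob R mu"
    and A: "assumption_A R"
    and p2: "p \<ge> 2"
    and part: "is_partition p F D"
    and pos_minus: "\<forall>N. beta_minus N > 0"
    and pos: "\<forall>N. beta N > 0"
    and ratio: "(\<lambda>N. beta_minus N / beta N) \<longlonglongrightarrow> 0"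
    and h0: "H0 mu p F"
    and h1: "H1 R mu p F beta"
    and h2: "H2 R mu p F beta_minus"
    and h3: "H3 R D beta"
    and cls: "comm_class p (rF R mu p F beta) C"
  shows "\<forall>eta\<in>(\<Union>x\<in>C. F x). \<forall>xi\<in>(\<Union>x\<in>C. F x). eta \<noteq> xi \<longrightarrow>
           (\<exists>m. 0 < m \<and> (\<lambda>N. mu N eta / mu N xi) \<longlonglongrightarrow> m)"
proof (intro ballI impI)
  fix eta xi assume "eta \<in> (\<Union>x\<in>C. F x)" "xi \<in> (\<Union>x\<in>C. F x)"
  then obtain x y where x: "x \<in> C" "eta \<in> F x" and y: "y \<in> C" "xi \<in> F y" by blast
  have hp: "0 < holding_rate R N a" for N a by (rule partition_holding_rate_pos[OF irr part p2])
  have "(\<lambda>N. mu N eta) \<in> \<Theta>(\<lambda>N. mu N xi)"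
    by (rule comm_class_states_bigtheta[OF irr inv part h0 h1 hp pos cls x y])
  then show "\<exists>m. 0 < m \<and> (\<lambda>N. mu N eta / mu N xi) \<longlonglongrightarrow> m"
    using invariant_prob_ratio_tendsto_or_at_top[OF irr inv A]
    by (intro bigtheta_imp_tendsto_pos invariant_prob_pos[OF irr inv])
qed

end
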